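(* Let $\omega\in\mathbb{H}$, and let $g\in\mathrm{PSL}_2(\mathbb{Z})$ be such that $g^{-1}\cdot\omega\in D_0+n$ for some $n\in\mathbb{Z}$. Assume $g\cdot\infty\neq\infty$ and write $g\cdot\infty=p/q$ in lowest terms with $q>0$. Let $\delta$ be the diameter of the (Euclidean) circle in the upper half-plane that is tangent to the real axis at $p/q$ and passes through $\omega$. Then $f(\omega)=\delta\,q^2$.
   Context: $\mathbb{H}=\{\omega\in\mathbb{C}:\mathrm{Im}(\omega)>0\}$. For $\omega\in\mathbb{H}$, $d(\omega)=\min\{|\alpha+\beta\omega| : \alpha,\beta\in\mathbb{Z},\ (\alpha,\beta)\neq(0,0)\}$ and $f(\omega)=d(\omega)^2/\mathrm{Im}(\omega)$. $\mathrm{PSL}_2(\mathbb{Z})$ acts on $\mathbb{H}\cup\mathbb{R}\cup\{\infty\}$ by $\begin{pmatrix}a&b\\c&d\end{pmatrix}\cdot\omega=\frac{a\omega+b}{c\omega+d}$, with $g\cdot\infty=a/c$ if $c\ne0$ and $g\cdot\infty=\infty$ if $c=0$. $D_0=\{\omega\in\mathbb{C}: -1/2\le\mathrm{Re}(\omega)\le1/2,\ |\omega|\ge1\}$ and $D_0+n=\{\zeta+n:\zeta\in D_0\}$. *)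

theory Defs
  imports "HOL-Analysis.Analysis"
begin

definition upper_half_plane :: "complex set" where
  "upper_half_plane = {w. Im w > 0}"

text \<open>d(w) = min of |alpha + beta w| over nonzero integer pairs (the minimum exists; we write it as Inf).\<close>
definition lat_d :: "complex \<Rightarrow> real" where
  "lat_d w = Inf {cmod (of_int \<alpha> + of_int \<beta> * w) | \<alpha> \<beta> :: int. (\<alpha>, \<beta>) \<noteq> (0, 0)}"

definition f_fun :: "complex \<Rightarrow> real" where
  "f_fun w = (lat_d w)\<^sup>2 / Im w"

definition moeb :: "int \<Rightarrow> int \<Rightarrow> int \<Rightarrow> int \<Rightarrow> complex \<Rightarrow> complex" where
  "moeb a b c d w = (of_int a * w + of_int b) / (of_int c * w + of_int d)"

definition D0 :: "complex set" where
  "D0 = {z. -1/2 \<le> Re z \<and> Re z \<le> 1/2 \<and> cmod z \<ge> 1}"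

end

theory Submission
  imports Defs
begin

text \<open>Write \<open>g = (a b; c d)\<close>. Since \<open>g\<inverse>\<omega> = (d\<omega> - b)/(a - c\<omega>)\<close>, the lattice
  \<open>\<int> + \<int>\<omega>\<close> is \<open>a - c\<omega>\<close> times the lattice \<open>\<int> + \<int>g\<inverse>\<omega>\<close>. The point \<open>g\<inverse>\<omega>\<close> lies in a
  translate of the fundamental domain, where every nonzero lattice vector has length at least
  \<open>1\<close> and the vector \<open>1\<close> attains it; hence \<open>d(\<omega>) = |a - c\<omega>| = |c| |\<omega> - a/c|\<close>. Finally
  \<open>|c| = q\<close>, and the circle of diameter \<open>\<delta>\<close> tangent to \<open>\<real>\<close> at \<open>p/q\<close> is the locus
  \<open>|\<omega> - p/q|\<^sup>2 = \<delta> Im \<omega>\<close>, so \<open>f(\<omega>) = |a - c\<omega>|\<^sup>2 / Im \<omega> = \<delta> q\<^sup>2\<close>.\<close>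

lemma int_quadratic_form_ge_one:
  fixes u k :: int
  assumes "(u, k) \<noteq> (0, 0)"
  shows "u\<^sup>2 - \<bar>u * k\<bar> + k\<^sup>2 \<ge> 1"
proof -
  have "u\<^sup>2 - \<bar>u * k\<bar> + k\<^sup>2 = (\<bar>u\<bar> - \<bar>k\<bar>)\<^sup>2 + \<bar>u\<bar> * \<bar>k\<bar>"
    by (simp add: power2_eq_square abs_mult algebra_simps)
  moreover have "(\<bar>u\<bar> - \<bar>k\<bar>)\<^sup>2 + \<bar>u\<bar> * \<bar>k\<bar> > 0"
  proof (cases "\<bar>u\<bar> = \<bar>k\<bar>")
    case True
    with assms have "u \<noteq> 0" "k \<noteq> 0" by auto
    then show ?thesis by (simp add: add_nonneg_pos)
  next
    case False
    then have "(\<bar>u\<bar> - \<bar>k\<bar>)\<^sup>2 > 0" by simp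
    then show ?thesis by (simp add: add_pos_nonneg)
  qed
  ultimately show ?thesis by simp
qed

lemma norm_lattice_point_ge_one_D0:
  fixes u k :: int
  assumes "z \<in> D0" "(u, k) \<noteq> (0, 0)"
  shows "cmod (of_int u + of_int k * z) \<ge> 1"
proof -
  let ?x = "Re z" and ?y = "Im z"
  define r s where "r = real_of_int u" and "s = real_of_int k"
  have x: "\<bar>?x\<bar> \<le> 1/2" using assms(1) by (auto simp: D0_def)
  have norm: "?x\<^sup>2 + ?y\<^sup>2 \<ge> 1" using assms(1) unfolding D0_def by (auto simp: cmod_def)
  have "1 \<le> real_of_int (u\<^sup>2 - \<bar>u * k\<bar> + k\<^sup>2)"
    using int_quadratic_form_ge_one[OF assms(2)] by (simp only: of_int_1_le_iff)
  then have form: "r\<^sup>2 - \<bar>r * s\<bar> + s\<^sup>2 \<ge> 1" by (simp add: r_def s_def)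
  have "\<bar>2 * r * s * ?x\<bar> = \<bar>r * s\<bar> * (2 * \<bar>?x\<bar>)" by (simp add: abs_mult)
  also have "\<dots> \<le> \<bar>r * s\<bar> * 1" by (rule mult_left_mono) (use x in auto)
  finally have cross: "2 * r * s * ?x \<ge> - \<bar>r * s\<bar>" by linarith
  have "s\<^sup>2 * 1 \<le> s\<^sup>2 * (?x\<^sup>2 + ?y\<^sup>2)" using norm by (rule mult_left_mono) simp
  moreover have "(cmod (of_int u + of_int k * z))\<^sup>2 = (r + s * ?x)\<^sup>2 + (s * ?y)\<^sup>2"
    by (simp add: cmod_def r_def s_def)
  moreover have "\<dots> = r\<^sup>2 + 2 * r * s * ?x + s\<^sup>2 * (?x\<^sup>2 + ?y\<^sup>2)"
    by (simp add: power2_eq_square algebra_simps)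
  ultimately have "(cmod (of_int u + of_int k * z))\<^sup>2 \<ge> 1\<^sup>2" using cross form by simp
  then show ?thesis by (rule power2_le_imp_le) simp
qed

lemma norm_lattice_point_ge_one_translate_D0:
  fixes u k n :: int
  assumes "z \<in> (\<lambda>z. z + of_int n) ` D0" "(u, k) \<noteq> (0, 0)"
  shows "cmod (of_int u + of_int k * z) \<ge> 1"
proof -
  obtain z' where z': "z' \<in> D0" "z = z' + of_int n" using assms(1) by auto
  have "(u + k * n, k) \<noteq> (0, 0)" using assms(2) by auto
  from norm_lattice_point_ge_one_D0[OF z'(1) this]
  have "1 \<le> cmod (of_int (u + k * n) + of_int k * z')" .
  moreover have "of_int u + of_int k * z = of_int (u + k * n) + of_int k * z'"
    using z'(2) by (simp add: algebra_simps)
  ultimately show ?thesis by (simp only:)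
qed

text \<open>The new coefficients \<open>(m, k)\<close> are the image of \<open>(\<alpha>, \<beta>)\<close> under the unimodular matrix
  \<open>(d b; c a)\<close>.\<close>
lemma lattice_point_eq_scaled_moeb_lattice_point:
  fixes a b c d \<alpha> \<beta> :: int
  assumes det: "a * d - b * c = 1" and nz: "of_int a - of_int c * \<omega> \<noteq> 0"
    and "(\<alpha>, \<beta>) \<noteq> (0, 0)"
  obtains m k :: int where "(m, k) \<noteq> (0, 0)"
    "of_int \<alpha> + of_int \<beta> * \<omega> = (of_int m + of_int k * moeb d (-b) (-c) a \<omega>) * (of_int a - of_int c * \<omega>)"
proof
  define m k where "m = d * \<alpha> + b * \<beta>" and "k = c * \<alpha> + a * \<beta>"
  have \<alpha>: "m * a - k * b = \<alpha>" and \<beta>: "k * d - m * c = \<beta>"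
    unfolding m_def k_def using det by (simp_all add: algebra_simps)
  show "(m, k) \<noteq> (0, 0)" using \<alpha> \<beta> assms(3) by auto
  define z w where "z = moeb d (-b) (-c) a \<omega>" and "w = of_int a - of_int c * \<omega>"
  have zw: "z * w = of_int d * \<omega> - of_int b"
    using nz by (simp add: z_def w_def moeb_def field_simps)
  have "(of_int m + of_int k * z) * w = of_int m * w + of_int k * (z * w)"
    by (simp add: algebra_simps)
  also have "\<dots> = of_int (m * a - k * b) + of_int (k * d - m * c) * \<omega>"
    unfolding zw by (simp add: w_def algebra_simps)
  finally show "of_int \<alpha> + of_int \<beta> * \<omega> = (of_int m + of_int k * moeb d (-b) (-c) a \<omega>) * (of_int a - of_int c * \<omega>)"
    using \<alpha> \<beta> by (simp add: z_def w_def)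
qed

lemma lat_d_eq_automorphy_factor:
  fixes a b c d n :: int
  assumes det: "a * d - b * c = 1" and "c \<noteq> 0" and nz: "of_int a - of_int c * \<omega> \<noteq> 0"
    and fund: "moeb d (-b) (-c) a \<omega> \<in> (\<lambda>z. z + of_int n) ` D0"
  shows "lat_d \<omega> = cmod (of_int a - of_int c * \<omega>)"
  unfolding lat_d_def
proof (rule cInf_eq_minimum)
  show "cmod (of_int a - of_int c * \<omega>) \<in> {cmod (of_int \<alpha> + of_int \<beta> * \<omega>) | \<alpha> \<beta> :: int. (\<alpha>, \<beta>) \<noteq> (0, 0)}"
    using \<open>c \<noteq> 0\<close> by (intro CollectI exI[of _ a] exI[of _ "-c"]) auto
next
  fix y assume "y \<in> {cmod (of_int \<alpha> + of_int \<beta> * \<omega>) | \<alpha> \<beta> :: int. (\<alpha>, \<beta>) \<noteq> (0, 0)}"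
  then obtain \<alpha> \<beta> :: int where "(\<alpha>, \<beta>) \<noteq> (0, 0)" and y: "y = cmod (of_int \<alpha> + of_int \<beta> * \<omega>)"
    by auto
  then obtain m k :: int where mk: "(m, k) \<noteq> (0, 0)"
    and eq: "of_int \<alpha> + of_int \<beta> * \<omega> = (of_int m + of_int k * moeb d (-b) (-c) a \<omega>) * (of_int a - of_int c * \<omega>)"
    using lattice_point_eq_scaled_moeb_lattice_point[OF det nz] by blast
  have "cmod (of_int m + of_int k * moeb d (-b) (-c) a \<omega>) \<ge> 1"
    using norm_lattice_point_ge_one_translate_D0[OF fund mk] .
  then show "cmod (of_int a - of_int c * \<omega>) \<le> y"
    unfolding y eq norm_mult by (simp add: mult_le_cancel_right1)
qed

lemma coprime_if_det_eq_one:
  fixes a b c d :: int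
  assumes "a * d - b * c = 1"
  shows "coprime a c"
proof (rule coprimeI)
  fix x assume "x dvd a" "x dvd c"
  then have "x dvd a * d - b * c" by (simp add: dvd_mult2 dvd_mult)
  then show "is_unit x" using assms by simp
qed

lemma abs_denominator_eq_if_coprime:
  fixes a c p q :: int
  assumes "coprime a c" "coprime p q" "q > 0" "a * q = p * c"
  shows "\<bar>c\<bar> = q"
proof -
  have "q dvd p * c" unfolding assms(4)[symmetric] by simp
  then have "q dvd c" using assms(2) by (simp add: coprime_dvd_mult_right_iff coprime_commute)
  moreover have "c dvd a * q" unfolding assms(4) by simp
  then have "c dvd q" using assms(1) by (simp add: coprime_dvd_mult_right_iff coprime_commute)
  ultimately show ?thesis using zdvd_antisym_abs \<open>q > 0\<close> by fastforce
qed

lemma horocycle_norm_eq: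
  assumes "cmod (\<omega> - (of_real x\<^sub>0 + \<i> * of_real (\<delta> / 2))) = \<delta> / 2"
  shows "(Re \<omega> - x\<^sub>0)\<^sup>2 + (Im \<omega>)\<^sup>2 = \<delta> * Im \<omega>"
proof -
  have "(cmod (\<omega> - (of_real x\<^sub>0 + \<i> * of_real (\<delta> / 2))))\<^sup>2 = (\<delta> / 2)\<^sup>2"
    using assms by (rule arg_cong)
  then have "(Re \<omega> - x\<^sub>0)\<^sup>2 + (Im \<omega> - \<delta> / 2)\<^sup>2 = (\<delta> / 2)\<^sup>2"
    by (simp add: cmod_def)
  then show ?thesis by (simp add: power2_eq_square algebra_simps)
qed

theorem proposition3:
  fixes \<omega> :: complex and a b c d p q :: int and \<delta> :: real
  assumes "\<omega> \<in> upper_half_plane"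
    and det: "a * d - b * c = 1"
    and fund: "\<exists>n::int. moeb d (-b) (-c) a \<omega> \<in> (\<lambda>z. z + of_int n) ` D0"
    and not_inf: "c \<noteq> 0"
    and lowest: "coprime p q" "q > 0"
    and cusp: "real_of_int a / real_of_int c = real_of_int p / real_of_int q"
    and circ: "\<delta> > 0"
      "cmod (\<omega> - (of_real (real_of_int p / real_of_int q) + \<i> * of_real (\<delta> / 2))) = \<delta> / 2"
  shows "f_fun \<omega> = \<delta> * (real_of_int q)\<^sup>2"
proof -
  have im: "Im \<omega> > 0" using assms(1) by (simp add: upper_half_plane_def)
  have "Im (of_int a - of_int c * \<omega>) \<noteq> 0" using im not_inf by simp
  then have nz: "of_int a - of_int c * \<omega> \<noteq> 0" by (rule contrapos_nn) simp
  obtain n :: int where "moeb d (-b) (-c) a \<omega> \<in> (\<lambda>z. z + of_int n) ` D0" using fund by blast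
  from lat_d_eq_automorphy_factor[OF det not_inf nz this]
  have lat: "lat_d \<omega> = cmod (of_int a - of_int c * \<omega>)" .
  have "a * q = p * c"
    using cusp not_inf lowest(2) by (simp add: field_simps) (metis of_int_eq_iff of_int_mult)
  with coprime_if_det_eq_one[OF det] lowest have "\<bar>c\<bar> = q"
    by (rule abs_denominator_eq_if_coprime)
  then have c2: "(real_of_int c)\<^sup>2 = (real_of_int q)\<^sup>2" by (metis of_int_power power2_abs)
  have "(cmod (of_int a - of_int c * \<omega>))\<^sup>2 = (a - c * Re \<omega>)\<^sup>2 + (c * Im \<omega>)\<^sup>2"
    by (simp add: cmod_def)
  also have "\<dots> = (real_of_int c)\<^sup>2 * ((Re \<omega> - a / c)\<^sup>2 + (Im \<omega>)\<^sup>2)"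
    using not_inf by (simp add: power2_eq_square field_simps)
  also have "\<dots> = (real_of_int q)\<^sup>2 * (\<delta> * Im \<omega>)"
    using c2 horocycle_norm_eq[OF circ(2)] cusp by simp
  finally show ?thesis using im by (simp add: f_fun_def lat)
qed

end
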